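(* Let $G=(V,E)$ be a control flow graph, let $p$ be a predicate node with successors $s_1,s_2$ in $G$ and with at least two successors in $A_p$. If $V_1\cap V_2\neq\emptyset$, then there are no nodes $a,b$ that are DOD on $p$.
   Context: A control flow graph (CFG) is a finite directed graph $G=(V,E)$ in which every node has at most two outgoing edges; nodes with exactly two outgoing edges are predicate nodes. A path from $n_1$ is a nonempty finite or infinite sequence of nodes with each adjacent pair an edge; it is maximal if it is infinite or its last node has no successor. $V_p$ is the set of nodes occurring on all maximal paths from $p$ in $G$. For $V'\subseteq V$, a $V'$-interval from $x$ to $y$ is a finite path $n_1\ldots n_k$ in $G$ with $k\ge 2$, $n_1=x\in V'$, $n_k=y\in V'$, and $n_i\notin V'$ for $1<i<k$. $A_p$ is the directed graph with node set $V_p$ and an edge $(x,y)$ iff there is a $V_p$-interval from $x$ to $y$ in $G$. For $i\in\{1,2\}$, $V_i$ is the set of nodes $n\in V_p$ such that there is a finite path in $G$ from $s_i$ to $n$ whose nodes other than the last one all lie outside $V_p$ (possibly $n=s_i$). For three distinct nodes $p,a,b$ with $p$ a predicate node with successors $s_1,s_2$, the nodes $a,b$ are DOD on $p$ if all maximal paths from $p$ contain both $a$ and $b$, all maximal paths from $s_1$ contain $a$ before any occurrence of $b$, and all maximal paths from $s_2$ contain $b$ before any occurrence of $a$. *)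

theory Defs
  imports Main "HOL-Library.Extended_Nat"
begin

definition succs :: "('v \<times> 'v) set \<Rightarrow> 'v \<Rightarrow> 'v set" where
  "succs E n = {m. (n, m) \<in> E}"

definition cfg :: "'v set \<Rightarrow> ('v \<times> 'v) set \<Rightarrow> bool" where
  "cfg V E \<longleftrightarrow> finite V \<and> E \<subseteq> V \<times> V \<and> (\<forall>n \<in> V. card (succs E n) \<le> 2)"

definition pred_node :: "('v \<times> 'v) set \<Rightarrow> 'v \<Rightarrow> 'v \<Rightarrow> 'v \<Rightarrow> bool" where
  "pred_node E p s1 s2 \<longleftrightarrow> s1 \<noteq> s2 \<and> succs E p = {s1, s2}"

definition fpath :: "('v \<times> 'v) set \<Rightarrow> 'v list \<Rightarrow> bool" where
  "fpath E xs \<longleftrightarrow> xs \<noteq> [] \<and> (\<forall>i. Suc i < length xs \<longrightarrow> (xs ! i, xs ! Suc i) \<in> E)"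

text \<open>A (finite or infinite) path is represented by a node sequence f together with
  its number of nodes n :: enat (n = \<infinity> for infinite paths, n \<ge> 1).\<close>
definition gpath :: "('v \<times> 'v) set \<Rightarrow> (nat \<Rightarrow> 'v) \<times> enat \<Rightarrow> bool" where
  "gpath E \<pi> \<longleftrightarrow> (case \<pi> of (f, n) \<Rightarrow>
      0 < n \<and> (\<forall>i. enat (Suc i) < n \<longrightarrow> (f i, f (Suc i)) \<in> E))"

definition maximal_path_from :: "('v \<times> 'v) set \<Rightarrow> 'v \<Rightarrow> (nat \<Rightarrow> 'v) \<times> enat \<Rightarrow> bool" where
  "maximal_path_from E x \<pi> \<longleftrightarrow> gpath E \<pi> \<and> fst \<pi> 0 = x \<and>
     (snd \<pi> = \<infinity> \<or> (\<exists>k. snd \<pi> = enat (Suc k) \<and> succs E (fst \<pi> k) = {}))"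

definition occurs :: "'v \<Rightarrow> (nat \<Rightarrow> 'v) \<times> enat \<Rightarrow> bool" where
  "occurs x \<pi> \<longleftrightarrow> (\<exists>i. enat i < snd \<pi> \<and> fst \<pi> i = x)"

definition occurs_before :: "'v \<Rightarrow> 'v \<Rightarrow> (nat \<Rightarrow> 'v) \<times> enat \<Rightarrow> bool" where
  "occurs_before a b \<pi> \<longleftrightarrow>
     (\<exists>i. enat i < snd \<pi> \<and> fst \<pi> i = a \<and> (\<forall>j \<le> i. fst \<pi> j \<noteq> b))"

definition Vp :: "'v set \<Rightarrow> ('v \<times> 'v) set \<Rightarrow> 'v \<Rightarrow> 'v set" where
  "Vp V E p = {x \<in> V. \<forall>\<pi>. maximal_path_from E p \<pi> \<longrightarrow> occurs x \<pi>}"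

definition interval :: "('v \<times> 'v) set \<Rightarrow> 'v set \<Rightarrow> 'v \<Rightarrow> 'v \<Rightarrow> 'v list \<Rightarrow> bool" where
  "interval E V' x y xs \<longleftrightarrow> fpath E xs \<and> length xs \<ge> 2 \<and> hd xs = x \<and> x \<in> V'
     \<and> last xs = y \<and> y \<in> V' \<and> (\<forall>i. 0 < i \<and> i < length xs - 1 \<longrightarrow> xs ! i \<notin> V')"

text \<open>Edge set of the graph A_p (its node set is V_p).\<close>
definition Ap_edges :: "'v set \<Rightarrow> ('v \<times> 'v) set \<Rightarrow> 'v \<Rightarrow> ('v \<times> 'v) set" where
  "Ap_edges V E p = {(x, y). \<exists>xs. interval E (Vp V E p) x y xs}"

definition Vsucc :: "'v set \<Rightarrow> ('v \<times> 'v) set \<Rightarrow> 'v \<Rightarrow> 'v \<Rightarrow> 'v set" where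
  "Vsucc V E p s = {n \<in> Vp V E p. \<exists>xs. fpath E xs \<and> hd xs = s \<and> last xs = n
      \<and> (\<forall>x \<in> set (butlast xs). x \<notin> Vp V E p)}"

definition DOD :: "('v \<times> 'v) set \<Rightarrow> 'v \<Rightarrow> 'v \<Rightarrow> 'v \<Rightarrow> 'v \<Rightarrow> 'v \<Rightarrow> bool" where
  "DOD E p s1 s2 a b \<longleftrightarrow> p \<noteq> a \<and> p \<noteq> b \<and> a \<noteq> b \<and> pred_node E p s1 s2 \<and>
     (\<forall>\<pi>. maximal_path_from E p \<pi> \<longrightarrow> occurs a \<pi> \<and> occurs b \<pi>) \<and>
     (\<forall>\<pi>. maximal_path_from E s1 \<pi> \<longrightarrow> occurs_before a b \<pi>) \<and>
     (\<forall>\<pi>. maximal_path_from E s2 \<pi> \<longrightarrow> occurs_before b a \<pi>)"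

end

theory Submission
  imports Defs
begin

text \<open>Take a node n in V_1 \<inter> V_2, reached from s_1 and from s_2 by paths that avoid V_p
  before their last node, and any maximal path \<pi> from n. Since a and b lie on every
  maximal path from p, they belong to V_p, so neither connecting path meets them.
  Prefixing \<pi> with the path from s_1 gives a maximal path from s_1, on which a comes
  before b; as the prefix avoids both, a comes before b already on \<pi>. Symmetrically b
  comes before a on \<pi>, which is absurd.\<close>

lemma maximal_path_from_exists: "\<exists>\<pi>. maximal_path_from E x \<pi>"
proof -
  define step where "step = (\<lambda>y. if succs E y = {} then y else SOME z. (y, z) \<in> E)"
  define g where "g = (\<lambda>i. (step ^^ i) x)"
  have edge: "succs E (g i) \<noteq> {} \<Longrightarrow> (g i, g (Suc i)) \<in> E" for i
    unfolding g_def step_def succs_def by (auto intro: someI)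
  show ?thesis
  proof (cases "\<forall>i. succs E (g i) \<noteq> {}")
    case True
    then have "maximal_path_from E x (g, \<infinity>)"
      unfolding maximal_path_from_def gpath_def using edge by (auto simp: g_def)
    then show ?thesis by blast
  next
    case False
    define k where "k = (LEAST i. succs E (g i) = {})"
    have dead_end: "succs E (g k) = {}"
      using False unfolding k_def by (metis (mono_tags, lifting) LeastI)
    have "i < k \<Longrightarrow> succs E (g i) \<noteq> {}" for i
      unfolding k_def using not_less_Least by blast
    then have "maximal_path_from E x (g, enat (Suc k))"
      unfolding maximal_path_from_def gpath_def using edge dead_end
      by (auto simp: g_def zero_enat_def)
    then show ?thesis by blast
  qed
qed

lemma fpath_butlast_subset:
  assumes "fpath E xs" and "E \<subseteq> V \<times> V"
  shows "set (butlast xs) \<subseteq> V"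
proof
  fix x assume "x \<in> set (butlast xs)"
  then obtain i where "i < length (butlast xs)" "x = butlast xs ! i"
    by (metis in_set_conv_nth)
  then have "Suc i < length xs" "x = xs ! i" by (auto simp: nth_butlast)
  then have "(x, xs ! Suc i) \<in> E" using assms(1) by (simp add: fpath_def)
  then show "x \<in> V" using assms(2) by blast
qed

text \<open>The finite path xs with its last node replaced by the path (f, m) starting there.\<close>
definition path_prepend :: "'v list \<Rightarrow> (nat \<Rightarrow> 'v) \<Rightarrow> enat \<Rightarrow> (nat \<Rightarrow> 'v) \<times> enat" where
  "path_prepend xs f m =
     (\<lambda>i. if i < length xs - 1 then xs ! i else f (i - (length xs - 1)), m + enat (length xs - 1))"

lemma maximal_path_from_prepend:
  assumes xs: "fpath E xs" "hd xs = s" "last xs = n"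
    and \<pi>: "maximal_path_from E n (f, m)"
  shows "maximal_path_from E s (path_prepend xs f m)"
proof -
  define L where "L = length xs - 1"
  define h where "h = (\<lambda>i. if i < L then xs ! i else f (i - L))"
  have prepend: "path_prepend xs f m = (h, m + enat L)"
    unfolding path_prepend_def h_def L_def by simp
  have "xs \<noteq> []" using xs(1) by (simp add: fpath_def)
  then have last_L: "xs ! L = n" using xs(3) by (simp add: L_def last_conv_nth)
  have f0: "f 0 = n" and m_pos: "0 < m"
    and f_edge: "\<And>i. enat (Suc i) < m \<Longrightarrow> (f i, f (Suc i)) \<in> E"
    using \<pi> by (auto simp: maximal_path_from_def gpath_def)
  have xs_edge: "\<And>i. Suc i < length xs \<Longrightarrow> (xs ! i, xs ! Suc i) \<in> E"
    using xs(1) by (simp add: fpath_def)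
  have h0: "h 0 = s"
    using xs(2) \<open>xs \<noteq> []\<close> f0 last_L by (auto simp: h_def hd_conv_nth)
  have h_edge: "(h i, h (Suc i)) \<in> E" if "enat (Suc i) < m + enat L" for i
  proof (cases "i < L")
    case True
    then have "Suc i < length xs" by (simp add: L_def)
    moreover have "Suc i < L \<or> Suc i = L" using True by linarith
    then have "h (Suc i) = xs ! Suc i" using last_L f0 by (auto simp: h_def)
    ultimately show ?thesis
      using xs_edge[of i] True by (simp add: h_def)
  next
    case False
    then have "enat (Suc (i - L)) < m" using that by (cases m) auto
    then show ?thesis
      using f_edge[of "i - L"] False by (simp add: h_def Suc_diff_le)
  qed
  have h_end: "m + enat L = \<infinity> \<or> (\<exists>k. m + enat L = enat (Suc k) \<and> succs E (h k) = {})"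
  proof (cases m)
    case (enat m')
    then obtain k where "m' = Suc k" "succs E (f k) = {}"
      using \<pi> by (auto simp: maximal_path_from_def)
    then have "m + enat L = enat (Suc (k + L)) \<and> succs E (h (k + L)) = {}"
      using enat by (simp add: h_def)
    then show ?thesis by blast
  qed simp
  have "0 < m + enat L" using m_pos by (cases m) (auto simp: zero_enat_def)
  then show ?thesis
    unfolding prepend maximal_path_from_def gpath_def
    using h0 h_edge h_end by simp
qed

lemma occurs_before_prepend_avoiding:
  assumes "occurs_before a b (path_prepend xs f m)"
    and "a \<notin> set (butlast xs)"
  shows "occurs_before a b (f, m)"
proof -
  define L where "L = length xs - 1"
  obtain i where i: "enat i < m + enat L"
    and at_a: "(if i < L then xs ! i else f (i - L)) = a"
    and no_b: "\<forall>j\<le>i. (if j < L then xs ! j else f (j - L)) \<noteq> b"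
    using assms(1) unfolding occurs_before_def path_prepend_def L_def[symmetric] by auto
  have "\<not> i < L"
    using at_a assms(2) by (auto simp: L_def nth_butlast in_set_conv_nth)
  show ?thesis
    unfolding occurs_before_def
  proof (intro exI[of _ "i - L"] conjI allI impI, simp_all)
    show "enat (i - L) < m" using i \<open>\<not> i < L\<close> by (cases m) auto
    show "f (i - L) = a" using at_a \<open>\<not> i < L\<close> by simp
    show "f j \<noteq> b" if "j \<le> i - L" for j
      using no_b[rule_format, of "j + L"] that \<open>\<not> i < L\<close> by simp
  qed
qed

lemma occurs_before_through_avoiding_path:
  assumes "fpath E xs" "hd xs = s" "last xs = n"
    and "a \<notin> set (butlast xs)"
    and "\<forall>\<pi>. maximal_path_from E s \<pi> \<longrightarrow> occurs_before a b \<pi>"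
    and "maximal_path_from E n \<pi>"
  shows "occurs_before a b \<pi>"
proof -
  obtain f m where \<pi>: "\<pi> = (f, m)" by fastforce
  have "maximal_path_from E s (path_prepend xs f m)"
    using assms(6) unfolding \<pi> by (rule maximal_path_from_prepend[OF assms(1-3)])
  then have "occurs_before a b (path_prepend xs f m)" using assms(5) by blast
  then show ?thesis
    unfolding \<pi> using assms(4) by (rule occurs_before_prepend_avoiding)
qed

lemma occurs_before_asym: "occurs_before a b \<pi> \<Longrightarrow> \<not> occurs_before b a \<pi>"
  unfolding occurs_before_def by (metis nat_le_linear)

lemma Vsucc_path_avoids:
  assumes "n \<in> Vsucc V E p s" and "E \<subseteq> V \<times> V"
    and "\<forall>\<pi>. maximal_path_from E p \<pi> \<longrightarrow> occurs x \<pi>"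
  obtains xs where "fpath E xs" "hd xs = s" "last xs = n" "x \<notin> set (butlast xs)"
proof -
  obtain xs where xs: "fpath E xs" "hd xs = s" "last xs = n"
    and outside: "\<forall>y \<in> set (butlast xs). y \<notin> Vp V E p"
    using assms(1) unfolding Vsucc_def by blast
  have "x \<notin> set (butlast xs)"
  proof
    assume x: "x \<in> set (butlast xs)"
    then have "x \<in> V" using fpath_butlast_subset[OF xs(1) assms(2)] by blast
    then have "x \<in> Vp V E p" using assms(3) by (simp add: Vp_def)
    then show False using outside x by blast
  qed
  with xs that show ?thesis by blast
qed

theorem lemma4p10:
  fixes V :: "'v set" and E :: "('v \<times> 'v) set" and p s1 s2 :: 'v
  assumes "cfg V E"
    and "p \<in> V"
    and "pred_node E p s1 s2"
    and "card {y. (p, y) \<in> Ap_edges V E p} \<ge> 2"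
    and "Vsucc V E p s1 \<inter> Vsucc V E p s2 \<noteq> {}"
  shows "\<not> (\<exists>a b. DOD E p s1 s2 a b)"
proof
  assume "\<exists>a b. DOD E p s1 s2 a b"
  then obtain a b where
    on_all: "\<forall>\<pi>. maximal_path_from E p \<pi> \<longrightarrow> occurs a \<pi> \<and> occurs b \<pi>"
    and a_first: "\<forall>\<pi>. maximal_path_from E s1 \<pi> \<longrightarrow> occurs_before a b \<pi>"
    and b_first: "\<forall>\<pi>. maximal_path_from E s2 \<pi> \<longrightarrow> occurs_before b a \<pi>"
    unfolding DOD_def by blast
  have E_V: "E \<subseteq> V \<times> V" using assms(1) by (simp add: cfg_def)
  obtain n where n1: "n \<in> Vsucc V E p s1" and n2: "n \<in> Vsucc V E p s2"
    using assms(5) by blast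
  obtain \<pi> where \<pi>: "maximal_path_from E n \<pi>"
    using maximal_path_from_exists[of E n] by blast
  obtain xs1 where "fpath E xs1" "hd xs1 = s1" "last xs1 = n" "a \<notin> set (butlast xs1)"
    using Vsucc_path_avoids[OF n1 E_V, of a] on_all by blast
  then have "occurs_before a b \<pi>"
    using a_first \<pi> by (rule occurs_before_through_avoiding_path)
  moreover
  obtain xs2 where "fpath E xs2" "hd xs2 = s2" "last xs2 = n" "b \<notin> set (butlast xs2)"
    using Vsucc_path_avoids[OF n2 E_V, of b] on_all by blast
  then have "occurs_before b a \<pi>"
    using b_first \<pi> by (rule occurs_before_through_avoiding_path)
  ultimately show False by (auto dest: occurs_before_asym)
qed

end
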